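(* Let $X_1,\dots,X_n$ be i.i.d. from a distribution $p_\theta$ in a natural univariate exponential family $\{p_\theta:\theta\in\Theta\}$, with mean parameter $\mu=B'(\theta)$, and let $\hat\mu(n)=\frac1n\sum_{i=1}^nX_i$. Then $$\mathbb{E}_{p_\theta}\big[n\,D_{\psi_\mu^*}(\hat\mu(n),\mu)\big]\le2\quad\text{for all }\theta\in\Theta.$$ Moreover, if $(\mu_1,\mu_0)\mapsto\sqrt{D_{\psi_{\mu_0}^*}(\mu_1,\mu_0)}$ satisfies the local triangle inequality condition with constants $M\in(0,1]$ and $\epsilon_0>0$, then for all sufficiently large $n$, $$\inf_{\hat\mu}\sup_{\theta\in\Theta}\mathbb{E}_{p_\theta}\big[n\,D_{\psi_\mu^*}(\hat\mu,\mu)\big]\ge\frac{M\log2}{16},$$ where the infimum is over all estimators based on $X_1,\dots,X_n$.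
   Context: Natural exponential family: densities $p_\theta(x)=\exp\{\theta x-B(\theta)\}$ w.r.t. a reference measure $\gamma$ on $\mathbb{R}$, with $\Theta$ a nonempty open subset of $\{\theta:\int e^{\theta x}\gamma(dx)<\infty\}$ and $B(\theta)=\log\int e^{\theta x}\gamma(dx)$ strictly convex. Mean parameter space $\mathcal{M}=\{B'(\theta):\theta\in\Theta\}$ (in bijection with $\Theta$). For $\theta\in\Theta$ with mean $\mu=B'(\theta)$, let $\Lambda_\theta=\{\lambda:\lambda+\theta\in\Theta\}$, $\psi(\lambda;\theta)=B(\lambda+\theta)-B(\theta)-\lambda B'(\theta)$, $\psi_\mu(\lambda)=\lambda\mu+\psi(\lambda;\theta)$, and $\psi_\mu^*(z)=\sup_{\lambda\in\Lambda_\theta}\{\lambda z-\psi_\mu(\lambda)\}$ its convex conjugate. Bregman divergence: $D_{\psi_\mu^*}(\hat\mu,\mu)=\psi_\mu^*(\hat\mu)-\psi_\mu^*(\mu)-\psi_\mu^{*\prime}(\mu)(\hat\mu-\mu)$. A function $d:\mathcal{M}\times\mathcal{M}\to[0,\infty)$ satisfies the local triangle inequality condition if there exist constants $0<M\le1$ and $\epsilon_0>0$ such that for all $\mu_0,\mu_1,\mu_2\in\mathcal{M}$ with $\max\{d(\mu_1,\mu_0),d(\mu_2,\mu_0)\}\le\epsilon_0$ one has $d(\mu_1,\mu_0)+d(\mu_2,\mu_0)\ge M\max\{d(\mu_1,\mu_2),d(\mu_2,\mu_1)\}$. *)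

theory Defs
  imports "HOL-Probability.Probability"
begin

definition strictly_convex_on :: "real set \<Rightarrow> (real \<Rightarrow> real) \<Rightarrow> bool" where
  "strictly_convex_on S f \<longleftrightarrow> convex S \<and>
     (\<forall>x\<in>S. \<forall>y\<in>S. \<forall>t. x \<noteq> y \<longrightarrow> 0 < t \<longrightarrow> t < 1 \<longrightarrow>
        f ((1 - t) * x + t * y) < (1 - t) * f x + t * f y)"

definition natparam :: "real measure \<Rightarrow> real set" where
  "natparam \<gamma> = {\<theta>. (\<integral>\<^sup>+ x. ennreal (exp (\<theta> * x)) \<partial>\<gamma>) < \<infinity>}"

definition logpart :: "real measure \<Rightarrow> real \<Rightarrow> real" where
  "logpart \<gamma> \<theta> = ln (\<integral> x. exp (\<theta> * x) \<partial>\<gamma>)"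

definition expfam :: "real measure \<Rightarrow> real \<Rightarrow> real measure" where
  "expfam \<gamma> \<theta> = density \<gamma> (\<lambda>x. ennreal (exp (\<theta> * x - logpart \<gamma> \<theta>)))"

definition meanp :: "real measure \<Rightarrow> real \<Rightarrow> real" where
  "meanp \<gamma> \<theta> = deriv (logpart \<gamma>) \<theta>"

definition psi :: "real measure \<Rightarrow> real \<Rightarrow> real \<Rightarrow> real" where
  "psi \<gamma> \<theta> l = logpart \<gamma> (l + \<theta>) - logpart \<gamma> \<theta> - l * meanp \<gamma> \<theta>"

definition psi_mu :: "real measure \<Rightarrow> real \<Rightarrow> real \<Rightarrow> real" where
  "psi_mu \<gamma> \<theta> l = l * meanp \<gamma> \<theta> + psi \<gamma> \<theta> l"

definition psi_star :: "real measure \<Rightarrow> real set \<Rightarrow> real \<Rightarrow> real \<Rightarrow> ereal" where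
  "psi_star \<gamma> \<Theta> \<theta> z = (SUP l \<in> {l. l + \<theta> \<in> \<Theta>}. ereal (l * z - psi_mu \<gamma> \<theta> l))"

definition bregman :: "real measure \<Rightarrow> real set \<Rightarrow> real \<Rightarrow> real \<Rightarrow> ereal" where
  "bregman \<gamma> \<Theta> \<theta> z =
     psi_star \<gamma> \<Theta> \<theta> z - psi_star \<gamma> \<Theta> \<theta> (meanp \<gamma> \<theta>)
     - ereal (deriv (\<lambda>w. real_of_ereal (psi_star \<gamma> \<Theta> \<theta> w)) (meanp \<gamma> \<theta>) * (z - meanp \<gamma> \<theta>))"

definition local_triangle :: "real set \<Rightarrow> (real \<Rightarrow> real \<Rightarrow> real) \<Rightarrow> real \<Rightarrow> real \<Rightarrow> bool" where
  "local_triangle Ms d M \<epsilon>0 \<longleftrightarrow> 0 < M \<and> M \<le> 1 \<and> 0 < \<epsilon>0 \<and>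
     (\<forall>\<mu>0\<in>Ms. \<forall>\<mu>1\<in>Ms. \<forall>\<mu>2\<in>Ms. max (d \<mu>1 \<mu>0) (d \<mu>2 \<mu>0) \<le> \<epsilon>0 \<longrightarrow>
        d \<mu>1 \<mu>0 + d \<mu>2 \<mu>0 \<ge> M * max (d \<mu>1 \<mu>2) (d \<mu>2 \<mu>1))"

text \<open>The root-Bregman function (mu1, mu0) |-> sqrt(D_{psi_{mu0}^*}(mu1, mu0)) on the mean space;
  mu0 is mapped back to its natural parameter.\<close>
definition sqrt_breg :: "real measure \<Rightarrow> real set \<Rightarrow> real \<Rightarrow> real \<Rightarrow> real" where
  "sqrt_breg \<gamma> \<Theta> \<mu>1 \<mu>0 =
     sqrt (real_of_ereal (bregman \<gamma> \<Theta> (THE \<theta>. \<theta> \<in> \<Theta> \<and> meanp \<gamma> \<theta> = \<mu>0) \<mu>1))"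

definition risk :: "real measure \<Rightarrow> real set \<Rightarrow> nat \<Rightarrow> ((nat \<Rightarrow> real) \<Rightarrow> real) \<Rightarrow> real \<Rightarrow> ennreal" where
  "risk \<gamma> \<Theta> n est \<theta> =
     (\<integral>\<^sup>+ X. e2ennreal (ereal (real n) * bregman \<gamma> \<Theta> \<theta> (est X))
        \<partial>(\<Pi>\<^sub>M i\<in>{..<n}. expfam \<gamma> \<theta>))"

end

theory Submission
  imports Defs
begin

text \<open>Upper bound: for the sample sum \<open>S\<close>, \<open>n D(S/n, \<mu>) = sup\<^sub>l (l S - n psi l)\<close>, which is
  at most the sum of the suprema over positive and over negative slopes. Each tilt
  \<open>exp (l S - n psi l)\<close> has expectation \<open>1\<close>, so by a Chernoff bound each supremum exceeds \<open>s\<close>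
  with probability at most \<open>exp (-s)\<close> and hence has expectation at most \<open>1\<close>.

  Lower bound: Le Cam's two-point method. Pick \<open>\<theta>1\<close> near \<open>\<theta>0\<close> such that the Bhattacharyya
  distance of the two \<open>n\<close>-samples is \<open>1/2\<close>. The tangent of \<open>B\<close> at the midpoint bounds the
  two losses from below by quantities summing to \<open>1\<close> for every estimate, so the two risks sum
  to at least the overlap of the two sample laws, which is at least half the squared Hellinger
  affinity, \<open>exp (-1) / 2\<close>. Hence the minimax risk is at least \<open>exp (-1) / 4 \<ge> M ln 2 / 16\<close>.\<close>

section \<open>Suprema of exponential tilts\<close>

lemma upclosed_real_cases:
  fixes U :: "real set"
  assumes up: "\<And>x y. x \<in> U \<Longrightarrow> x \<le> y \<Longrightarrow> y \<in> U"
  obtains "U = {}" | "U = UNIV" | a where "U = {a..}" | a where "U = {a<..}"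
proof (cases "U = {}")
  case ne: False
  show ?thesis
  proof (cases "bdd_below U")
    case bdd: True
    have lo: "Inf U \<le> x" if "x \<in> U" for x
      using that bdd by (rule cInf_lower)
    have hi: "y \<in> U" if "Inf U < y" for y
      using that up cInf_less_iff[OF ne bdd] by (meson less_imp_le)
    show ?thesis
    proof (cases "Inf U \<in> U")
      case True
      then have "U = {Inf U..}" using lo up by auto
      then show ?thesis by (rule that(3))
    next
      case False
      then have "U = {Inf U<..}" using lo hi by (force simp: less_le)
      then show ?thesis by (rule that(4))
    qed
  next
    case False
    have "y \<in> U" for y
    proof -
      obtain x where "x \<in> U" "x \<le> y"
        using False unfolding bdd_below_def by (meson linorder_not_le less_imp_le)
      then show ?thesis using up by blast
    qed
    then have "U = UNIV" by blast
    then show ?thesis by (rule that(2))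
  qed
qed (rule that(1))

lemma upclosed_real_borel:
  fixes U :: "real set"
  assumes "\<And>x y. x \<in> U \<Longrightarrow> x \<le> y \<Longrightarrow> y \<in> U"
  shows "U \<in> sets borel"
  using assms by (rule upclosed_real_cases) simp_all

lemma emeasure_upclosed_preimage_le:
  fixes S :: "'a \<Rightarrow> real" and U :: "real set"
  assumes up: "\<And>x y. x \<in> U \<Longrightarrow> x \<le> y \<Longrightarrow> y \<in> U"
    and S[measurable]: "S \<in> borel_measurable M"
    and tail: "\<And>y. y \<in> U \<Longrightarrow> emeasure M {x\<in>space M. y \<le> S x} \<le> c"
  shows "emeasure M {x\<in>space M. S x \<in> U} \<le> c"
proof -
  have union_le: "emeasure M {x\<in>space M. S x \<in> U} \<le> c"
    if y: "antimono y" "\<And>k. y k \<in> U" and eq: "\<And>t. t \<in> U \<longleftrightarrow> (\<exists>k. y k \<le> t)"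
    for y :: "nat \<Rightarrow> real"
  proof -
    have "{x\<in>space M. S x \<in> U} = (\<Union>k. {x\<in>space M. y k \<le> S x})" using eq by auto
    also have "emeasure M \<dots> = (SUP k. emeasure M {x\<in>space M. y k \<le> S x})"
    proof (intro SUP_emeasure_incseq[symmetric] incseq_SucI)
      show "{x\<in>space M. y k \<le> S x} \<subseteq> {x\<in>space M. y (Suc k) \<le> S x}" for k
        using antimonoD[OF y(1), of k "Suc k"] by auto
    qed auto
    also have "\<dots> \<le> c" using y(2) by (intro SUP_least tail)
    finally show ?thesis .
  qed
  show ?thesis
  proof (rule upclosed_real_cases[OF up])
    assume "U = {}"
    then show ?thesis by simp
  next
    assume U: "U = UNIV"
    show ?thesis
    proof (rule union_le[of "\<lambda>k. - real k"])
      show "t \<in> U \<longleftrightarrow> (\<exists>k. - real k \<le> t)" for t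
        using U real_arch_simple[of "-t"] by (auto simp: minus_le_iff)
    qed (auto simp: U antimono_def)
  next
    fix a assume "U = {a..}"
    then show ?thesis using tail[of a] by simp
  next
    fix a assume U: "U = {a<..}"
    show ?thesis
    proof (rule union_le[of "\<lambda>k. a + 1 / Suc k"])
      show "antimono (\<lambda>k. a + 1 / Suc k)"
        by (auto simp: antimono_def frac_le)
      show "t \<in> U \<longleftrightarrow> (\<exists>k. a + 1 / Suc k \<le> t)" for t
      proof
        assume "t \<in> U"
        then obtain k where "inverse (real (Suc k)) < t - a"
          using U reals_Archimedean[of "t - a"] by auto
        then have "a + 1 / Suc k \<le> t" by (simp add: inverse_eq_divide)
        then show "\<exists>k. a + 1 / Suc k \<le> t" ..
      qed (use U in \<open>auto intro: less_le_trans[of _ "a + 1 / Suc _"]\<close>)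
    qed (simp add: U)
  qed
qed

definition conj_pos :: "real set \<Rightarrow> (real \<Rightarrow> real) \<Rightarrow> real \<Rightarrow> ennreal" where
  "conj_pos T \<phi> y = (SUP l\<in>T. ennreal (l * y - \<phi> l))"

lemma mono_conj_pos:
  assumes "T \<subseteq> {0<..}"
  shows "mono (conj_pos T \<phi>)"
proof (rule monoI)
  fix y y' :: real assume "y \<le> y'"
  then have "ennreal (l * y - \<phi> l) \<le> ennreal (l * y' - \<phi> l)" if "l \<in> T" for l
    using that assms by (auto intro!: ennreal_leI mult_left_mono)
  then show "conj_pos T \<phi> y \<le> conj_pos T \<phi> y'"
    unfolding conj_pos_def by (intro SUP_mono) blast
qed

lemma conj_pos_upclosed:
  assumes "T \<subseteq> {0<..}" "c < conj_pos T \<phi> y" "y \<le> y'"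
  shows "c < conj_pos T \<phi> y'"
  using assms mono_conj_pos[OF assms(1)] by (auto dest: monoD intro: less_le_trans)

lemma borel_measurable_conj_pos:
  assumes "T \<subseteq> {0<..}"
  shows "conj_pos T \<phi> \<in> borel_measurable borel"
proof (rule borel_measurableI_greater)
  fix c
  have "{y. c < conj_pos T \<phi> y} \<in> sets borel"
    by (rule upclosed_real_borel) (use conj_pos_upclosed[OF assms] in blast)
  then show "{y \<in> space borel. c < conj_pos T \<phi> y} \<in> sets borel" by simp
qed

lemma emeasure_conj_pos_greater_le:
  fixes S :: "'a \<Rightarrow> real"
  assumes S[measurable]: "S \<in> borel_measurable M" and T: "T \<subseteq> {0<..}"
    and mgf: "\<And>l. l \<in> T \<Longrightarrow> (\<integral>\<^sup>+x. ennreal (exp (l * S x - \<phi> l)) \<partial>M) \<le> 1"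
    and s: "0 \<le> s"
  shows "emeasure M {x\<in>space M. ennreal s < conj_pos T \<phi> (S x)} \<le> ennreal (exp (-s))"
proof -
  have "emeasure M {x\<in>space M. S x \<in> {y. ennreal s < conj_pos T \<phi> y}} \<le> ennreal (exp (-s))"
  proof (rule emeasure_upclosed_preimage_le[OF _ S])
    show "y' \<in> {y. ennreal s < conj_pos T \<phi> y}" if "y \<in> {y. ennreal s < conj_pos T \<phi> y}" "y \<le> y'"
      for y y' using that conj_pos_upclosed[OF T] by blast
  next
    fix y assume "y \<in> {y. ennreal s < conj_pos T \<phi> y}"
    then obtain l where l: "l \<in> T" "ennreal s < ennreal (l * y - \<phi> l)"
      by (auto simp: conj_pos_def less_SUP_iff)
    have l0: "0 < l" and sl: "s < l * y - \<phi> l"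
      using l T s by (auto simp: ennreal_less_iff)
    have "emeasure M {x\<in>space M. y \<le> S x}
        \<le> ennreal (exp (- l * y)) * (\<integral>\<^sup>+x. ennreal (exp (l * S x)) * indicator (space M) x \<partial>M)"
      by (rule Chernoff_ineq_nn_integral_ge[OF l0]) auto
    also have "(\<integral>\<^sup>+x. ennreal (exp (l * S x)) * indicator (space M) x \<partial>M)
        = (\<integral>\<^sup>+x. ennreal (exp (\<phi> l)) * ennreal (exp (l * S x - \<phi> l)) \<partial>M)"
      by (intro nn_integral_cong) (simp add: ennreal_mult[symmetric] flip: exp_add)
    also have "\<dots> = ennreal (exp (\<phi> l)) * (\<integral>\<^sup>+x. ennreal (exp (l * S x - \<phi> l)) \<partial>M)"
      by (rule nn_integral_cmult) measurable
    also have "ennreal (exp (- l * y)) * \<dots> \<le> ennreal (exp (- l * y)) * (ennreal (exp (\<phi> l)) * 1)"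
      by (intro mult_left_mono mgf l) auto
    also have "\<dots> = ennreal (exp (- (l * y - \<phi> l)))"
      by (simp add: ennreal_mult[symmetric] flip: exp_add)
    also have "\<dots> \<le> ennreal (exp (-s))"
      using sl by (intro ennreal_leI) simp
    finally show "emeasure M {x\<in>space M. y \<le> S x} \<le> ennreal (exp (-s))" .
  qed
  then show ?thesis by simp
qed

lemma emeasure_lborel_nonneg_below: "emeasure lborel {s::real. 0 \<le> s \<and> ennreal s < e} = e"
proof (cases e)
  case (real r)
  then have "{s::real. 0 \<le> s \<and> ennreal s < e} = {0..<r}"
    by (auto simp: ennreal_less_iff)
  then show ?thesis using real by simp
next
  case top
  have "ennreal (real n) \<le> emeasure lborel {0::real..}" for n
  proof -
    have "ennreal (real n) = emeasure lborel {0::real..<real n}" by simp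
    also have "\<dots> \<le> emeasure lborel {0::real..}" by (rule emeasure_mono) auto
    finally show ?thesis .
  qed
  then have "(SUP n. of_nat n :: ennreal) \<le> emeasure lborel {0::real..}"
    by (intro SUP_least) (simp add: ennreal_of_nat_eq_real_of_nat)
  then have "emeasure lborel {0::real..} = \<infinity>"
    by (simp add: ennreal_SUP_of_nat_eq_top top_unique)
  moreover have "{s::real. 0 \<le> s \<and> ennreal s < e} = {0..}" using top by auto
  ultimately show ?thesis using top by simp
qed

text \<open>Layer-cake formula: the integral is that of the tail function, which is at most
  \<open>\<integral>\<^sub>0\<^sup>\<infinity> exp (-s) ds = 1\<close>.\<close>
lemma nn_integral_le_1_of_exp_tail:
  assumes "sigma_finite_measure M" and F[measurable]: "F \<in> borel_measurable M"
    and tail: "\<And>s. 0 \<le> s \<Longrightarrow> emeasure M {x\<in>space M. ennreal s < F x} \<le> ennreal (exp (-s))"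
  shows "(\<integral>\<^sup>+x. F x \<partial>M) \<le> 1"
proof -
  interpret pair_sigma_finite M lborel
    unfolding pair_sigma_finite_def using assms(1) lborel.sigma_finite_measure_axioms by blast
  define H where "H x s = (indicator {s. 0 \<le> s \<and> ennreal s < F x} s :: ennreal)" for x s
  have [measurable]: "case_prod H \<in> borel_measurable (M \<Otimes>\<^sub>M lborel)"
    unfolding H_def indicator_def by measurable
  have "(\<integral>\<^sup>+x. F x \<partial>M) = (\<integral>\<^sup>+x. (\<integral>\<^sup>+s. H x s \<partial>lborel) \<partial>M)"
    unfolding H_def by (simp add: emeasure_lborel_nonneg_below)
  also have "\<dots> = (\<integral>\<^sup>+s. (\<integral>\<^sup>+x. H x s \<partial>M) \<partial>lborel)" by (rule Fubini'[symmetric]) measurable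
  also have "\<dots> \<le> (\<integral>\<^sup>+s. ennreal (exp (-s)) * indicator {0..} s \<partial>lborel)"
  proof (rule nn_integral_mono)
    fix s :: real
    show "(\<integral>\<^sup>+x. H x s \<partial>M) \<le> ennreal (exp (-s)) * indicator {0..} s"
    proof (cases "0 \<le> s")
      case True
      have "(\<integral>\<^sup>+x. H x s \<partial>M) = (\<integral>\<^sup>+x. indicator {x\<in>space M. ennreal s < F x} x \<partial>M)"
        using True by (intro nn_integral_cong) (simp add: H_def indicator_def)
      also have "\<dots> = emeasure M {x\<in>space M. ennreal s < F x}" by simp
      finally show ?thesis using tail[OF True] True by simp
    qed (simp add: H_def)
  qed
  also have "\<dots> = 1" using nn_intergal_power_times_exp_Ici[of 0] by simp
  finally show ?thesis .
qed

lemma nn_integral_conj_pos_le_1: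
  fixes S :: "'a \<Rightarrow> real"
  assumes "sigma_finite_measure M" and S[measurable]: "S \<in> borel_measurable M"
    and T: "T \<subseteq> {0<..}"
    and mgf: "\<And>l. l \<in> T \<Longrightarrow> (\<integral>\<^sup>+x. ennreal (exp (l * S x - \<phi> l)) \<partial>M) \<le> 1"
  shows "(\<integral>\<^sup>+x. conj_pos T \<phi> (S x) \<partial>M) \<le> 1"
proof (rule nn_integral_le_1_of_exp_tail[OF assms(1)])
  show "(\<lambda>x. conj_pos T \<phi> (S x)) \<in> borel_measurable M"
    using borel_measurable_conj_pos[OF T] by measurable
qed (rule emeasure_conj_pos_greater_le[OF S T mgf])

section \<open>Overlap and Hellinger affinity\<close>

lemma amgm_min_one_sq:
  fixes t w :: real
  assumes t: "0 < t" and w: "0 \<le> w"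
  shows "ennreal w \<le> ennreal (t / 2) * ennreal (min 1 (w\<^sup>2)) + ennreal (1 / (2 * t)) * (1 + ennreal (w\<^sup>2))"
proof -
  have "2 * t * w \<le> t * t * min 1 (w\<^sup>2) + (1 + w\<^sup>2)"
  proof (cases "w \<le> 1")
    case True
    then have "min 1 (w\<^sup>2) = w\<^sup>2" using w by (simp add: power_le_one)
    moreover have "0 \<le> (t * w - 1)\<^sup>2 + w\<^sup>2" by simp
    ultimately show ?thesis by (simp add: power2_eq_square algebra_simps)
  next
    case False
    then have "min 1 (w\<^sup>2) = 1" using w by (simp add: one_le_power)
    moreover have "0 \<le> (t - w)\<^sup>2" by simp
    ultimately show ?thesis by (simp add: power2_eq_square algebra_simps)
  qed
  then have "ennreal w \<le> ennreal (t / 2 * min 1 (w\<^sup>2) + 1 / (2 * t) * (1 + w\<^sup>2))"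
    using t by (intro ennreal_leI) (simp add: field_simps)
  also have "\<dots> = ennreal (t / 2) * ennreal (min 1 (w\<^sup>2)) + ennreal (1 / (2 * t)) * (1 + ennreal (w\<^sup>2))"
  proof -
    have split: "ennreal (a * m + b * (1 + q)) = ennreal a * ennreal m + ennreal b * (1 + ennreal q)"
      if "0 \<le> a" "0 \<le> b" "0 \<le> m" "0 \<le> q" for a b m q :: real
      using that by (subst ennreal_plus) (auto simp: ennreal_mult)
    show ?thesis by (rule split) (use t in auto)
  qed
  finally show ?thesis .
qed

text \<open>Integrate \<open>amgm_min_one_sq\<close> with \<open>t = 2 / \<rho>\<close>.\<close>
lemma nn_integral_min_one_sq_ge:
  fixes w :: "'a \<Rightarrow> real"
  assumes M: "prob_space M" and w[measurable]: "w \<in> borel_measurable M" and w0: "\<And>x. 0 \<le> w x"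
    and sq: "(\<integral>\<^sup>+x. ennreal ((w x)\<^sup>2) \<partial>M) \<le> 1"
    and \<rho>: "0 < \<rho>" "ennreal \<rho> \<le> (\<integral>\<^sup>+x. ennreal (w x) \<partial>M)"
  shows "ennreal (\<rho>\<^sup>2 / 2) \<le> (\<integral>\<^sup>+x. ennreal (min 1 ((w x)\<^sup>2)) \<partial>M)"
proof -
  define t where "t = 2 / \<rho>"
  have t: "0 < t" using \<rho> by (simp add: t_def)
  define A where "A = (\<integral>\<^sup>+x. ennreal (min 1 ((w x)\<^sup>2)) \<partial>M)"
  have "A \<le> (\<integral>\<^sup>+x. 1 \<partial>M)" unfolding A_def by (intro nn_integral_mono) simp
  then have "A \<le> 1" using prob_space.emeasure_space_1[OF M] by simp
  then obtain \<alpha> where \<alpha>: "A = ennreal \<alpha>" "0 \<le> \<alpha>"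
    by (cases A) (auto simp: top_unique)
  have "ennreal \<rho> \<le> (\<integral>\<^sup>+x. ennreal (t / 2) * ennreal (min 1 ((w x)\<^sup>2))
      + ennreal (1 / (2 * t)) * (1 + ennreal ((w x)\<^sup>2)) \<partial>M)"
    using \<rho>(2) amgm_min_one_sq[OF t w0] by (blast intro: order_trans nn_integral_mono)
  also have "\<dots> = ennreal (t / 2) * A
      + ennreal (1 / (2 * t)) * ((\<integral>\<^sup>+x. 1 \<partial>M) + (\<integral>\<^sup>+x. ennreal ((w x)\<^sup>2) \<partial>M))"
    unfolding A_def by (simp add: nn_integral_add nn_integral_cmult)
  also have "\<dots> \<le> ennreal (t / 2) * A + ennreal (1 / (2 * t)) * (1 + 1)"
    using prob_space.emeasure_space_1[OF M] sq by (intro add_left_mono mult_left_mono add_mono) auto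
  also have "\<dots> = ennreal (t / 2 * \<alpha>) + ennreal (1 / t)"
  proof -
    have "ennreal (1 / (2 * t)) * 2 = ennreal (1 / (2 * t)) * ennreal 2" by simp
    also have "\<dots> = ennreal (1 / t)" using t by (subst ennreal_mult[symmetric]) auto
    finally show ?thesis using t \<alpha> by (simp add: ennreal_mult'[symmetric])
  qed
  also have "\<dots> = ennreal (t / 2 * \<alpha> + 1 / t)"
    using t \<alpha> by (intro ennreal_plus[symmetric]) auto
  finally have "\<rho> \<le> t / 2 * \<alpha> + 1 / t"
    using t \<alpha> by (subst (asm) ennreal_le_iff) auto
  then have "\<rho> \<le> \<alpha> / \<rho> + \<rho> / 2" by (simp add: t_def)
  then have "\<rho>\<^sup>2 / 2 \<le> \<alpha>" using \<rho> by (simp add: field_simps power2_eq_square)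
  then show ?thesis using \<alpha> by (simp add: A_def)
qed

lemma exp_minus_one_minus_le: "exp u - 1 - u \<le> u\<^sup>2 * exp \<bar>u\<bar>" for u :: real
proof -
  have "exp u * (1 - u) \<le> exp u * exp (-u)"
    using exp_ge_add_one_self[of "-u"] by (intro mult_left_mono) auto
  then have key: "exp u - 1 \<le> u * exp u" by (simp add: algebra_simps flip: exp_add)
  then have "exp u - 1 - u \<le> u * (exp u - 1)" by (simp add: algebra_simps)
  also have "u * (exp u - 1) \<le> u\<^sup>2 * exp \<bar>u\<bar>"
  proof (cases "u \<ge> 0")
    case True
    then have "u * (exp u - 1) \<le> u * (u * exp u)" using key by (intro mult_left_mono)
    then show ?thesis using True by (simp add: power2_eq_square)
  next
    case False
    have "u * (exp u - 1) = (-u) * (1 - exp u)" by (simp add: algebra_simps)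
    also have "\<dots> \<le> (-u) * (-u)"
      using False exp_ge_add_one_self[of u] by (intro mult_left_mono) linarith+
    also have "\<dots> = u\<^sup>2 * 1" by (simp add: power2_eq_square)
    also have "\<dots> \<le> u\<^sup>2 * exp \<bar>u\<bar>" by (intro mult_left_mono) auto
    finally show ?thesis .
  qed
  finally show ?thesis .
qed

lemma sq_le_exp_abs: "0 < d \<Longrightarrow> x\<^sup>2 \<le> 4 / d\<^sup>2 * exp (d * \<bar>x\<bar>)" for x d :: real
proof -
  assume d: "0 < d"
  have "d * \<bar>x\<bar> / 2 \<le> exp (d * \<bar>x\<bar> / 2)"
    using exp_ge_add_one_self[of "d * \<bar>x\<bar> / 2"] by linarith
  then have "(d * \<bar>x\<bar> / 2)\<^sup>2 \<le> (exp (d * \<bar>x\<bar> / 2))\<^sup>2"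
    using d by (intro power_mono) auto
  also have "(exp (d * \<bar>x\<bar> / 2))\<^sup>2 = exp (d * \<bar>x\<bar>)"
    by (simp add: power2_eq_square flip: exp_add)
  finally have "d\<^sup>2 * x\<^sup>2 / 4 \<le> exp (d * \<bar>x\<bar>)" by (simp add: power_mult_distrib power_divide)
  then show ?thesis using d by (simp add: field_simps)
qed

definition exp_envelope :: "real \<Rightarrow> real \<Rightarrow> real \<Rightarrow> real" where
  "exp_envelope d \<theta> x = x\<^sup>2 * exp (d * \<bar>x\<bar>) * exp (\<theta> * x)"

lemma exp_envelope_le:
  fixes d \<theta> x :: real
  assumes d: "0 < d"
  shows "exp_envelope d \<theta> x \<le> 4 / d\<^sup>2 * (exp ((\<theta> + 2 * d) * x) + exp ((\<theta> - 2 * d) * x))"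
proof -
  have "x\<^sup>2 * exp (d * \<bar>x\<bar>) \<le> 4 / d\<^sup>2 * exp (d * \<bar>x\<bar>) * exp (d * \<bar>x\<bar>)"
    using sq_le_exp_abs[OF d, of x] by (intro mult_right_mono) auto
  also have "\<dots> = 4 / d\<^sup>2 * exp (2 * d * \<bar>x\<bar>)"
    by (simp add: mult.assoc flip: exp_add)
  also have "\<dots> \<le> 4 / d\<^sup>2 * (exp (2 * d * x) + exp (- (2 * d) * x))"
    by (intro mult_left_mono, cases "x \<ge> 0") (auto simp: add_increasing add_increasing2)
  finally have "x\<^sup>2 * exp (d * \<bar>x\<bar>) * exp (\<theta> * x)
      \<le> 4 / d\<^sup>2 * (exp (2 * d * x) + exp (- (2 * d) * x)) * exp (\<theta> * x)"
    by (intro mult_right_mono) auto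
  also have "\<dots> = 4 / d\<^sup>2 * (exp ((\<theta> + 2 * d) * x) + exp ((\<theta> - 2 * d) * x))"
    by (simp add: algebra_simps flip: exp_add)
  finally show ?thesis unfolding exp_envelope_def .
qed

lemma exp_shift_remainder_le:
  fixes d h \<theta> x :: real
  assumes hd: "\<bar>h\<bar> \<le> d"
  shows "\<bar>exp ((\<theta> + h) * x) - exp (\<theta> * x) - h * (x * exp (\<theta> * x))\<bar> \<le> h\<^sup>2 * exp_envelope d \<theta> x"
proof -
  have "exp ((\<theta> + h) * x) - exp (\<theta> * x) - h * (x * exp (\<theta> * x))
      = exp (\<theta> * x) * (exp (h * x) - 1 - h * x)"
    by (simp add: algebra_simps flip: exp_add)
  moreover have "0 \<le> exp (h * x) - 1 - h * x" using exp_ge_add_one_self[of "h * x"] by linarith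
  moreover have "exp (h * x) - 1 - h * x \<le> (h * x)\<^sup>2 * exp (d * \<bar>x\<bar>)"
    using exp_minus_one_minus_le[of "h * x"] hd
    by (auto simp: abs_mult intro!: mult_left_mono mult_right_mono elim!: order_trans)
  ultimately have "\<bar>exp ((\<theta> + h) * x) - exp (\<theta> * x) - h * (x * exp (\<theta> * x))\<bar>
      \<le> exp (\<theta> * x) * ((h * x)\<^sup>2 * exp (d * \<bar>x\<bar>))"
    by (simp add: mult_left_mono)
  also have "\<dots> = h\<^sup>2 * (x\<^sup>2 * exp (d * \<bar>x\<bar>) * exp (\<theta> * x))"
    by (simp add: algebra_simps power_mult_distrib)
  finally show ?thesis unfolding exp_envelope_def .
qed

lemma has_real_derivative_of_quadratic_remainder:
  fixes f :: "real \<Rightarrow> real"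
  assumes d: "0 < d" and rem: "\<And>h. \<bar>h\<bar> \<le> d \<Longrightarrow> \<bar>f (x + h) - f x - h * D\<bar> \<le> C * h\<^sup>2"
  shows "(f has_real_derivative D) (at x)"
proof -
  have "((\<lambda>h. (f (x + h) - f x) / h - D) \<longlongrightarrow> 0) (at 0)"
  proof (rule Lim_null_comparison)
    have "norm ((f (x + h) - f x) / h - D) \<le> C * \<bar>h\<bar>" if "h \<noteq> 0" "\<bar>h\<bar> < d" for h :: real
    proof -
      have "norm ((f (x + h) - f x) / h - D) = \<bar>f (x + h) - f x - h * D\<bar> / \<bar>h\<bar>"
        using that by (simp add: field_simps)
      also have "\<dots> \<le> C * h\<^sup>2 / \<bar>h\<bar>" using rem that by (intro divide_right_mono) auto
      also have "\<dots> = C * \<bar>h\<bar>" using that by (simp add: power2_eq_square field_simps abs_mult_self_eq)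
      finally show ?thesis .
    qed
    then show "\<forall>\<^sub>F h in at 0. norm ((f (x + h) - f x) / h - D) \<le> C * \<bar>h\<bar>"
      using d unfolding eventually_at by (metis dist_real_def diff_zero)
    show "((\<lambda>h. C * \<bar>h\<bar>) \<longlongrightarrow> 0) (at 0)" by (auto intro!: tendsto_eq_intros)
  qed
  then show ?thesis by (simp add: DERIV_def LIM_zero_iff)
qed

lemma exp_affine_sum: "exp (a * (\<Sum>i<n. X i) - real n * c) = (\<Prod>i<n. exp (a * X i - c))"
proof -
  have "a * (\<Sum>i<n. X i) - real n * c = (\<Sum>i<n. a * X i - c)"
    by (simp add: sum_subtractf sum_distrib_left)
  then show ?thesis by (simp add: exp_sum)
qed

lemma ereal_le_enn2ereal: "ennreal v \<le> G \<Longrightarrow> ereal v \<le> enn2ereal G"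
  by (cases "0 \<le> v") (auto simp: ennreal_neg zero_ennreal.rep_eq less_eq_ennreal.rep_eq
      intro: order_trans[OF _ enn2ereal_nonneg])

lemma ennreal_add_le: "ennreal (x + y) \<le> ennreal x + ennreal y"
proof (cases "0 \<le> x \<and> 0 \<le> y")
  case False
  then have "ennreal (x + y) \<le> ennreal x \<or> ennreal (x + y) \<le> ennreal y"
    by (auto intro: ennreal_leI)
  then show ?thesis by (auto intro: order_trans add_increasing add_increasing2)
qed (simp add: ennreal_plus)

section \<open>Natural exponential families\<close>

locale nat_exp_family =
  fixes \<gamma> :: "real measure" and \<Theta> :: "real set"
  assumes sets_\<gamma>: "sets \<gamma> = sets borel"
    and open_\<Theta>: "open \<Theta>" and ne_\<Theta>: "\<Theta> \<noteq> {}"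
    and sub_\<Theta>: "\<Theta> \<subseteq> natparam \<gamma>"
    and strict: "strictly_convex_on (natparam \<gamma>) (logpart \<gamma>)"
begin

abbreviation B :: "real \<Rightarrow> real" where "B \<equiv> logpart \<gamma>"

definition laplace :: "real \<Rightarrow> real" where "laplace t = (\<integral>x. exp (t * x) \<partial>\<gamma>)"

lemma borel_measurable_\<gamma>: "f \<in> borel_measurable borel \<Longrightarrow> f \<in> borel_measurable \<gamma>"
  using measurable_cong_sets[OF sets_\<gamma> refl] by blast

lemma integrable_exp_natparam: "t \<in> natparam \<gamma> \<Longrightarrow> integrable \<gamma> (\<lambda>x. exp (t * x))"
  by (rule integrableI_bounded) (auto intro: borel_measurable_\<gamma> simp: natparam_def)

lemma nn_integral_exp_natparam:
  "t \<in> natparam \<gamma> \<Longrightarrow> (\<integral>\<^sup>+x. ennreal (exp (t * x)) \<partial>\<gamma>) = ennreal (laplace t)"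
  unfolding laplace_def by (rule nn_integral_eq_integral[OF integrable_exp_natparam]) auto

lemma strict_midpoint:
  assumes "a \<in> natparam \<gamma>" "b \<in> natparam \<gamma>" "a \<noteq> b"
  shows "B ((a + b) / 2) < (B a + B b) / 2"
proof -
  have "B ((1 - t) * a + t * b) < (1 - t) * B a + t * B b" if "0 < t" "t < 1" for t
    using strict assms that unfolding strictly_convex_on_def by blast
  from this[of "1/2"] show ?thesis by (simp add: field_simps)
qed

text \<open>Strict convexity of \<open>B\<close> excludes the null measure, for which \<open>B = ln 0 = 0\<close>.\<close>
lemma emeasure_space_\<gamma>_nonzero: "emeasure \<gamma> (space \<gamma>) \<noteq> 0"
proof
  assume "emeasure \<gamma> (space \<gamma>) = 0"
  then have ae: "AE x in \<gamma>. False" by (rule emeasure_0_AE)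
  then have "B t = 0" for t
    using ae by (simp add: logpart_def integral_cong_AE[where g="\<lambda>_. 0"] borel_measurable_\<gamma>)
  moreover have "(\<integral>\<^sup>+ x. ennreal (exp (t * x)) \<partial>\<gamma>) = 0" for t
    using ae by (subst nn_integral_cong_AE[where v="\<lambda>_. 0"]) auto
  then have "0 \<in> natparam \<gamma>" "1 \<in> natparam \<gamma>" by (auto simp: natparam_def)
  ultimately show False using strict_midpoint[of 0 1] by simp
qed

lemma laplace_pos: "t \<in> natparam \<gamma> \<Longrightarrow> 0 < laplace t"
proof -
  assume t: "t \<in> natparam \<gamma>"
  have "(\<integral>\<^sup>+x. ennreal (exp (t * x)) \<partial>\<gamma>) \<noteq> 0"
  proof
    assume "(\<integral>\<^sup>+x. ennreal (exp (t * x)) \<partial>\<gamma>) = 0"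
    then have "AE x in \<gamma>. False"
      by (subst (asm) nn_integral_0_iff_AE) (auto intro: borel_measurable_\<gamma>)
    then show False using emeasure_space_\<gamma>_nonzero by (metis ae_filter_eq_bot_iff eventually_False)
  qed
  then show ?thesis using nn_integral_exp_natparam[OF t] by (simp add: laplace_def less_le)
qed

lemma exp_logpart: "t \<in> natparam \<gamma> \<Longrightarrow> exp (B t) = laplace t"
  using laplace_pos by (simp add: logpart_def laplace_def)

lemma convex_natparam: "convex (natparam \<gamma>)"
  using strict by (simp add: strictly_convex_on_def)

lemma natparam_between:
  "a \<in> natparam \<gamma> \<Longrightarrow> b \<in> natparam \<gamma> \<Longrightarrow> a \<le> x \<Longrightarrow> x \<le> b \<Longrightarrow> x \<in> natparam \<gamma>"
  using convex_natparam unfolding is_interval_convex_1[symmetric] is_interval_1 by blast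

lemma convex_on_logpart: "convex_on (natparam \<gamma>) B"
proof (rule convex_onI)
  fix t x y :: real assume "0 < t" "t < 1" "x \<in> natparam \<gamma>" "y \<in> natparam \<gamma>"
  then show "B ((1 - t) *\<^sub>R x + t *\<^sub>R y) \<le> (1 - t) * B x + t * B y"
  proof (cases "x = y")
    case False
    with strict \<open>0 < t\<close> \<open>t < 1\<close> \<open>x \<in> natparam \<gamma>\<close> \<open>y \<in> natparam \<gamma>\<close>
    have "B ((1 - t) * x + t * y) < (1 - t) * B x + t * B y"
      unfolding strictly_convex_on_def by blast
    then show ?thesis by simp
  qed (simp add: algebra_simps)
qed (rule convex_natparam)

lemma integrable_exp_envelope:
  assumes d: "0 < d" and p1: "\<theta> + 2 * d \<in> natparam \<gamma>" and p2: "\<theta> - 2 * d \<in> natparam \<gamma>"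
  shows "integrable \<gamma> (exp_envelope d \<theta>)"
proof (rule Bochner_Integration.integrable_bound)
  show "integrable \<gamma> (\<lambda>x. 4 / d\<^sup>2 * (exp ((\<theta> + 2 * d) * x) + exp ((\<theta> - 2 * d) * x)))"
    by (intro integrable_mult_right Bochner_Integration.integrable_add integrable_exp_natparam p1 p2)
  show "exp_envelope d \<theta> \<in> borel_measurable \<gamma>"
    unfolding exp_envelope_def by (intro borel_measurable_\<gamma>) simp
  show "AE x in \<gamma>. norm (exp_envelope d \<theta> x)
      \<le> norm (4 / d\<^sup>2 * (exp ((\<theta> + 2 * d) * x) + exp ((\<theta> - 2 * d) * x)))"
    using exp_envelope_le[OF d] by (simp add: exp_envelope_def)
qed

lemma integrable_mult_exp:
  assumes d: "0 < d" and p1: "\<theta> + 2 * d \<in> natparam \<gamma>" and p2: "\<theta> - 2 * d \<in> natparam \<gamma>"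
  shows "integrable \<gamma> (\<lambda>x. x * exp (\<theta> * x))"
proof (rule Bochner_Integration.integrable_bound)
  show "integrable \<gamma> (\<lambda>x. exp (\<theta> * x) + exp_envelope d \<theta> x)"
    using natparam_between[OF p2 p1, of \<theta>] d
    by (intro Bochner_Integration.integrable_add integrable_exp_natparam integrable_exp_envelope p1 p2) auto
  show "(\<lambda>x. x * exp (\<theta> * x)) \<in> borel_measurable \<gamma>" by (intro borel_measurable_\<gamma>) simp
  show "AE x in \<gamma>. norm (x * exp (\<theta> * x)) \<le> norm (exp (\<theta> * x) + exp_envelope d \<theta> x)"
  proof (intro AE_I2)
    fix x :: real
    have "0 \<le> (\<bar>x\<bar> - 1)\<^sup>2" by (rule zero_le_power2)
    then have "\<bar>x\<bar> \<le> 1 + x\<^sup>2" by (simp add: power2_eq_square algebra_simps)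
    moreover have "x\<^sup>2 * 1 \<le> x\<^sup>2 * exp (d * \<bar>x\<bar>)" using d by (intro mult_left_mono) auto
    ultimately have "\<bar>x\<bar> * exp (\<theta> * x) \<le> (1 + x\<^sup>2 * exp (d * \<bar>x\<bar>)) * exp (\<theta> * x)"
      by (intro mult_right_mono) auto
    then show "norm (x * exp (\<theta> * x)) \<le> norm (exp (\<theta> * x) + exp_envelope d \<theta> x)"
      by (simp add: abs_mult algebra_simps exp_envelope_def)
  qed
qed

lemma laplace_has_derivative:
  assumes d: "0 < d" and p1: "\<theta> + 2 * d \<in> natparam \<gamma>" and p2: "\<theta> - 2 * d \<in> natparam \<gamma>"
  shows "(laplace has_real_derivative (\<integral>x. x * exp (\<theta> * x) \<partial>\<gamma>)) (at \<theta>)"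
proof (rule has_real_derivative_of_quadratic_remainder[OF d])
  fix h :: real assume hd: "\<bar>h\<bar> \<le> d"
  have ph: "\<theta> + h \<in> natparam \<gamma>" and pt: "\<theta> \<in> natparam \<gamma>"
    using natparam_between[OF p2 p1, of "\<theta> + h"] natparam_between[OF p2 p1, of \<theta>] hd d by auto
  have ints: "integrable \<gamma> (\<lambda>x. exp ((\<theta> + h) * x))" "integrable \<gamma> (\<lambda>x. exp (\<theta> * x))"
    "integrable \<gamma> (\<lambda>x. x * exp (\<theta> * x))"
    using integrable_exp_natparam[OF ph] integrable_exp_natparam[OF pt] integrable_mult_exp[OF assms] .
  have "laplace (\<theta> + h) - laplace \<theta> - h * (\<integral>x. x * exp (\<theta> * x) \<partial>\<gamma>)
      = (\<integral>x. exp ((\<theta> + h) * x) - exp (\<theta> * x) - h * (x * exp (\<theta> * x)) \<partial>\<gamma>)"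
    unfolding laplace_def using ints by simp
  also have "\<bar>\<dots>\<bar> \<le> (\<integral>x. h\<^sup>2 * exp_envelope d \<theta> x \<partial>\<gamma>)"
  proof -
    have "integrable \<gamma> (\<lambda>x. exp ((\<theta> + h) * x) - exp (\<theta> * x) - h * (x * exp (\<theta> * x)))"
      using ints by auto
    from Bochner_Integration.integral_norm_bound_integral[OF this, of "\<lambda>x. h\<^sup>2 * exp_envelope d \<theta> x"]
    show ?thesis
      using integrable_exp_envelope[OF assms] exp_shift_remainder_le[OF hd]
      by simp
  qed
  finally show "\<bar>laplace (\<theta> + h) - laplace \<theta> - h * (\<integral>x. x * exp (\<theta> * x) \<partial>\<gamma>)\<bar>
      \<le> (\<integral>x. exp_envelope d \<theta> x \<partial>\<gamma>) * h\<^sup>2"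
    by (simp add: mult.commute)
qed

lemma \<Theta>_ball: "\<theta> \<in> \<Theta> \<Longrightarrow> \<exists>e>0. \<forall>t. \<bar>t - \<theta>\<bar> < e \<longrightarrow> t \<in> \<Theta>"
  using open_\<Theta> unfolding open_dist dist_real_def by (metis abs_minus_commute)

lemma \<Theta>_natparam: "t \<in> \<Theta> \<Longrightarrow> t \<in> natparam \<gamma>"
  using sub_\<Theta> by blast

lemma logpart_has_derivative:
  assumes "\<theta> \<in> \<Theta>"
  shows "(B has_real_derivative meanp \<gamma> \<theta>) (at \<theta>)"
proof -
  obtain e where e: "e > 0" "\<And>t. \<bar>t - \<theta>\<bar> < e \<Longrightarrow> t \<in> \<Theta>" using \<Theta>_ball[OF assms] by blast
  have p: "\<theta> + 2 * (e / 4) \<in> natparam \<gamma>" "\<theta> - 2 * (e / 4) \<in> natparam \<gamma>"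
    using e by (auto intro!: \<Theta>_natparam)
  have "((\<lambda>t. ln (laplace t)) has_real_derivative
      1 / laplace \<theta> * (\<integral>x. x * exp (\<theta> * x) \<partial>\<gamma>)) (at \<theta>)"
    using laplace_pos[OF \<Theta>_natparam[OF assms]] e(1)
    by (intro DERIV_chain2[OF DERIV_ln_divide laplace_has_derivative[OF _ p]]) auto
  moreover have "(\<lambda>t. ln (laplace t)) = B" by (simp add: fun_eq_iff logpart_def laplace_def)
  ultimately show ?thesis unfolding meanp_def using DERIV_imp_deriv by fastforce
qed

lemma isCont_logpart: "\<theta> \<in> \<Theta> \<Longrightarrow> isCont B \<theta>"
  using logpart_has_derivative DERIV_isCont by blast

lemma logpart_above_tangent:
  assumes "\<theta> \<in> \<Theta>" and "t \<in> natparam \<gamma>"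
  shows "meanp \<gamma> \<theta> * (t - \<theta>) \<le> B t - B \<theta>"
proof -
  have "\<theta> \<in> interior (natparam \<gamma>)"
    using interior_maximal[OF sub_\<Theta> open_\<Theta>] assms(1) by blast
  then show ?thesis
    using convex_on_imp_above_tangent[OF convex_on_logpart convex_connected[OF convex_natparam] _ assms(2)]
      logpart_has_derivative[OF assms(1)]
    by (simp add: has_field_derivative_at_within)
qed

lemma psi_nonneg: "\<theta> \<in> \<Theta> \<Longrightarrow> l + \<theta> \<in> natparam \<gamma> \<Longrightarrow> 0 \<le> psi \<gamma> \<theta> l"
  using logpart_above_tangent[of \<theta> "l + \<theta>"] by (simp add: psi_def algebra_simps)

lemma psi_scale:
  assumes "\<theta> \<in> \<Theta>" and "l + \<theta> \<in> natparam \<gamma>" and "0 \<le> s" "s \<le> 1"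
  shows "psi \<gamma> \<theta> (s * l) \<le> s * psi \<gamma> \<theta> l"
proof -
  have "B ((1 - s) *\<^sub>R \<theta> + s *\<^sub>R (l + \<theta>)) \<le> (1 - s) * B \<theta> + s * B (l + \<theta>)"
    using assms by (intro convex_onD[OF convex_on_logpart]) (auto intro: \<Theta>_natparam)
  moreover have "(1 - s) *\<^sub>R \<theta> + s *\<^sub>R (l + \<theta>) = s * l + \<theta>" by (simp add: algebra_simps)
  ultimately show ?thesis by (simp add: psi_def algebra_simps)
qed

lemma psi_pos:
  assumes \<theta>: "\<theta> \<in> \<Theta>" and l: "l + \<theta> \<in> natparam \<gamma>" and "l \<noteq> 0"
  shows "0 < psi \<gamma> \<theta> l"
proof -
  have \<theta>n: "\<theta> \<in> natparam \<gamma>" using \<Theta>_natparam \<theta> .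
  have "B ((\<theta> + (l + \<theta>)) / 2) < (B \<theta> + B (l + \<theta>)) / 2"
    using strict_midpoint[OF \<theta>n l] \<open>l \<noteq> 0\<close> by simp
  moreover have "(\<theta> + (l + \<theta>)) / 2 = l / 2 + \<theta>" by (simp add: field_simps)
  ultimately have "B (l / 2 + \<theta>) < (B \<theta> + B (l + \<theta>)) / 2" by metis
  moreover have "l / 2 + \<theta> \<in> natparam \<gamma>"
    using natparam_between[OF \<theta>n l] natparam_between[OF l \<theta>n] by (cases "l \<ge> 0") auto
  ultimately show ?thesis using psi_nonneg[OF \<theta>, of "l / 2"] by (simp add: psi_def)
qed

lemma psi_star_eq:
  "psi_star \<gamma> \<Theta> \<theta> z = (SUP l\<in>{l. l + \<theta> \<in> \<Theta>}. ereal (l * z - (B (l + \<theta>) - B \<theta>)))"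
  unfolding psi_star_def psi_mu_def psi_def by (simp add: algebra_simps)

lemma psi_star_nonneg: "\<theta> \<in> \<Theta> \<Longrightarrow> 0 \<le> psi_star \<gamma> \<Theta> \<theta> z"
  unfolding psi_star_eq by (rule SUP_upper2[of 0]) (auto simp: zero_ereal_def)

lemma psi_star_meanp: "\<theta> \<in> \<Theta> \<Longrightarrow> psi_star \<gamma> \<Theta> \<theta> (meanp \<gamma> \<theta>) = 0"
  using psi_nonneg \<Theta>_natparam
  by (intro antisym psi_star_nonneg)
     (auto simp: psi_star_eq psi_def zero_ereal_def intro!: SUP_least)

text \<open>Superlinear growth of \<open>psi\<close>: by convexity \<open>psi l \<ge> (|l| / \<delta>) min (psi \<delta>) (psi (-\<delta>))\<close> for
  \<open>|l| \<ge> \<delta>\<close>, so for small \<open>w\<close> only slopes \<open>|l| \<le> \<delta>\<close> matter in the supremum.\<close>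
lemma psi_star_small:
  assumes \<theta>: "\<theta> \<in> \<Theta>" and \<epsilon>: "0 < \<epsilon>"
  shows "\<exists>\<eta>>0. \<forall>w. \<bar>w\<bar> < \<eta> \<longrightarrow> psi_star \<gamma> \<Theta> \<theta> (meanp \<gamma> \<theta> + w) \<le> ereal (\<epsilon> * \<bar>w\<bar>)"
proof -
  obtain e where e: "e > 0" "\<And>t. \<bar>t - \<theta>\<bar> < e \<Longrightarrow> t \<in> \<Theta>" using \<Theta>_ball[OF \<theta>] by blast
  define \<delta> where "\<delta> = min (e / 2) \<epsilon>"
  have \<delta>: "0 < \<delta>" "\<delta> < e" "\<delta> \<le> \<epsilon>" using e \<epsilon> by (auto simp: \<delta>_def)
  have pd: "\<delta> + \<theta> \<in> natparam \<gamma>" "-\<delta> + \<theta> \<in> natparam \<gamma>"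
    using e(2) \<delta> \<Theta>_natparam by auto
  define \<eta>0 where "\<eta>0 = min (psi \<gamma> \<theta> \<delta>) (psi \<gamma> \<theta> (-\<delta>))"
  have \<eta>0: "0 < \<eta>0" unfolding \<eta>0_def using psi_pos[OF \<theta> pd(1)] psi_pos[OF \<theta> pd(2)] \<delta> by auto
  show ?thesis
  proof (intro exI[of _ "\<eta>0 / \<delta>"] conjI allI impI)
    show "0 < \<eta>0 / \<delta>" using \<eta>0 \<delta> by simp
    fix w assume w: "\<bar>w\<bar> < \<eta>0 / \<delta>"
    show "psi_star \<gamma> \<Theta> \<theta> (meanp \<gamma> \<theta> + w) \<le> ereal (\<epsilon> * \<bar>w\<bar>)"
      unfolding psi_star_eq
    proof (rule SUP_least)
      fix l assume "l \<in> {l. l + \<theta> \<in> \<Theta>}"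
      then have ln: "l + \<theta> \<in> natparam \<gamma>" using \<Theta>_natparam by auto
      have lw: "l * w \<le> \<bar>l\<bar> * \<bar>w\<bar>" by (metis abs_ge_self abs_mult)
      have "l * w - psi \<gamma> \<theta> l \<le> \<epsilon> * \<bar>w\<bar>"
      proof (cases "\<bar>l\<bar> \<le> \<delta>")
        case True
        have "\<bar>l\<bar> * \<bar>w\<bar> \<le> \<epsilon> * \<bar>w\<bar>" using True \<delta> by (intro mult_right_mono) auto
        then show ?thesis using psi_nonneg[OF \<theta> ln] lw by linarith
      next
        case False
        define s where "s = \<delta> / \<bar>l\<bar>"
        have lpos: "0 < \<bar>l\<bar>" using False \<delta> by linarith
        have s: "0 \<le> s" "s \<le> 1" using False \<delta> by (auto simp: s_def)
        have "s * l = \<delta> \<or> s * l = -\<delta>" using lpos by (auto simp: s_def abs_if)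
        then have "\<eta>0 \<le> psi \<gamma> \<theta> (s * l)" by (auto simp: \<eta>0_def)
        then have "\<eta>0 \<le> \<delta> / \<bar>l\<bar> * psi \<gamma> \<theta> l" using psi_scale[OF \<theta> ln s] by (simp add: s_def)
        then have "\<bar>l\<bar> * (\<eta>0 / \<delta>) \<le> psi \<gamma> \<theta> l" using lpos \<delta> by (simp add: field_simps)
        moreover have "\<bar>l\<bar> * \<bar>w\<bar> \<le> \<bar>l\<bar> * (\<eta>0 / \<delta>)" using w by (intro mult_left_mono) auto
        ultimately show ?thesis using lw \<epsilon> by (smt (verit) zero_le_mult_iff abs_ge_zero)
      qed
      then show "ereal (l * (meanp \<gamma> \<theta> + w) - (B (l + \<theta>) - B \<theta>)) \<le> ereal (\<epsilon> * \<bar>w\<bar>)"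
        by (simp add: psi_def algebra_simps)
    qed
  qed
qed

lemma psi_star_has_derivative_0:
  assumes \<theta>: "\<theta> \<in> \<Theta>"
  shows "((\<lambda>w. real_of_ereal (psi_star \<gamma> \<Theta> \<theta> w)) has_real_derivative 0) (at (meanp \<gamma> \<theta>))"
proof -
  let ?f = "\<lambda>w. real_of_ereal (psi_star \<gamma> \<Theta> \<theta> w)" and ?\<mu> = "meanp \<gamma> \<theta>"
  have "((\<lambda>h. (?f (?\<mu> + h) - ?f ?\<mu>) / h) \<longlongrightarrow> 0) (at 0)"
    unfolding tendsto_iff
  proof (intro allI impI)
    fix e :: real assume e: "0 < e"
    obtain \<eta> where \<eta>: "\<eta> > 0" "\<And>w. \<bar>w\<bar> < \<eta> \<Longrightarrow> psi_star \<gamma> \<Theta> \<theta> (?\<mu> + w) \<le> ereal (e / 2 * \<bar>w\<bar>)"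
      using psi_star_small[OF \<theta>, of "e / 2"] e by auto
    have "dist ((?f (?\<mu> + h) - ?f ?\<mu>) / h) 0 < e" if h: "h \<noteq> 0" "\<bar>h\<bar> < \<eta>" for h
    proof -
      obtain r where r: "psi_star \<gamma> \<Theta> \<theta> (?\<mu> + h) = ereal r" "0 \<le> r" "r \<le> e / 2 * \<bar>h\<bar>"
        using \<eta>(2)[OF h(2)] psi_star_nonneg[OF \<theta>, of "?\<mu> + h"]
        by (cases "psi_star \<gamma> \<Theta> \<theta> (?\<mu> + h)") auto
      have "dist ((?f (?\<mu> + h) - ?f ?\<mu>) / h) 0 = r / \<bar>h\<bar>" using r psi_star_meanp[OF \<theta>] by simp
      also have "\<dots> \<le> e / 2" using r(3) h by (simp add: divide_le_eq)
      also have "\<dots> < e" using e by simp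
      finally show ?thesis .
    qed
    then show "\<forall>\<^sub>F h in at 0. dist ((?f (?\<mu> + h) - ?f ?\<mu>) / h) 0 < e"
      using \<eta>(1) unfolding eventually_at by (metis dist_real_def diff_zero)
  qed
  then show ?thesis by (simp add: DERIV_def)
qed

lemma bregman_eq_psi_star: "\<theta> \<in> \<Theta> \<Longrightarrow> bregman \<gamma> \<Theta> \<theta> z = psi_star \<gamma> \<Theta> \<theta> z"
  unfolding bregman_def using psi_star_meanp DERIV_imp_deriv[OF psi_star_has_derivative_0]
  by (simp add: zero_ereal_def[symmetric])

lemma bregman_ge:
  assumes "\<theta> \<in> \<Theta>" and "t \<in> \<Theta>"
  shows "ereal ((t - \<theta>) * z - (B t - B \<theta>)) \<le> bregman \<gamma> \<Theta> \<theta> z"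
  unfolding bregman_eq_psi_star[OF assms(1)] psi_star_eq
  by (rule SUP_upper2[of "t - \<theta>"]) (use assms(2) in auto)

lemma sets_expfam: "sets (expfam \<gamma> \<theta>) = sets borel"
  by (simp add: expfam_def sets_\<gamma>)

lemma borel_measurable_expfam: "f \<in> borel_measurable borel \<Longrightarrow> f \<in> borel_measurable (expfam \<gamma> \<theta>)"
  using measurable_cong_sets[OF sets_expfam refl] by blast

lemma sets_PiM_expfam: "sets (\<Pi>\<^sub>M i\<in>I. expfam \<gamma> \<theta>) = sets (\<Pi>\<^sub>M i\<in>I. (borel :: real measure))"
  by (rule sets_PiM_cong) (auto simp: sets_expfam)

lemma sets_PiM_\<gamma>: "sets (\<Pi>\<^sub>M i\<in>I. \<gamma>) = sets (\<Pi>\<^sub>M i\<in>I. (borel :: real measure))"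
  by (rule sets_PiM_cong) (auto simp: sets_\<gamma>)

lemma borel_measurable_PiM_expfam:
  "f \<in> borel_measurable (\<Pi>\<^sub>M i\<in>I. borel) \<Longrightarrow> f \<in> borel_measurable (\<Pi>\<^sub>M i\<in>I. expfam \<gamma> \<theta>)"
  using measurable_cong_sets[OF sets_PiM_expfam refl] by blast

lemma nn_integral_exp_expfam:
  assumes "\<theta> \<in> natparam \<gamma>" and "\<theta> + a \<in> natparam \<gamma>"
  shows "(\<integral>\<^sup>+x. ennreal (exp (a * x - c)) \<partial>expfam \<gamma> \<theta>) = ennreal (exp (B (\<theta> + a) - B \<theta> - c))"
proof -
  have "(\<integral>\<^sup>+x. ennreal (exp (a * x - c)) \<partial>expfam \<gamma> \<theta>)
      = (\<integral>\<^sup>+x. ennreal (exp (\<theta> * x - B \<theta>)) * ennreal (exp (a * x - c)) \<partial>\<gamma>)"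
    unfolding expfam_def by (rule nn_integral_density) (auto intro: borel_measurable_\<gamma>)
  also have "\<dots> = (\<integral>\<^sup>+x. ennreal (exp (- B \<theta> - c)) * ennreal (exp ((\<theta> + a) * x)) \<partial>\<gamma>)"
    by (intro nn_integral_cong) (simp add: ennreal_mult[symmetric] algebra_simps flip: exp_add)
  also have "\<dots> = ennreal (exp (- B \<theta> - c)) * ennreal (exp (B (\<theta> + a)))"
    using assms by (subst nn_integral_cmult)
      (auto intro: borel_measurable_\<gamma> simp: nn_integral_exp_natparam exp_logpart)
  also have "\<dots> = ennreal (exp (B (\<theta> + a) - B \<theta> - c))"
    by (simp add: ennreal_mult[symmetric] flip: exp_add)
  finally show ?thesis .
qed

lemma prob_space_expfam: "\<theta> \<in> natparam \<gamma> \<Longrightarrow> prob_space (expfam \<gamma> \<theta>)"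
  using nn_integral_exp_expfam[of \<theta> 0 0] by (intro prob_spaceI) (simp add: nn_integral_const)

lemma nn_integral_exp_sum_PiM:
  assumes "\<theta> \<in> natparam \<gamma>" and "\<theta> + a \<in> natparam \<gamma>"
  shows "(\<integral>\<^sup>+X. ennreal (exp (a * (\<Sum>i<n. X i) - real n * c)) \<partial>(\<Pi>\<^sub>M i\<in>{..<n}. expfam \<gamma> \<theta>))
     = ennreal (exp (real n * (B (\<theta> + a) - B \<theta> - c)))"
proof -
  interpret product_prob_space "\<lambda>_. expfam \<gamma> \<theta>"
    by (rule product_prob_spaceI) (rule prob_space_expfam[OF assms(1)])
  have prod: "ennreal (exp (a * (\<Sum>i<n. X i) - real n * c)) = (\<Prod>i<n. ennreal (exp (a * X i - c)))"
    for X :: "nat \<Rightarrow> real"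
    by (simp add: exp_affine_sum prod_ennreal)
  have "(\<integral>\<^sup>+X. ennreal (exp (a * (\<Sum>i<n. X i) - real n * c)) \<partial>(\<Pi>\<^sub>M i\<in>{..<n}. expfam \<gamma> \<theta>))
      = (\<Prod>i<n. (\<integral>\<^sup>+x. ennreal (exp (a * x - c)) \<partial>expfam \<gamma> \<theta>))"
    unfolding prod by (rule product_nn_integral_prod) (auto intro!: borel_measurable_expfam)
  also have "\<dots> = ennreal (exp (real n * (B (\<theta> + a) - B \<theta> - c)))"
    by (simp add: nn_integral_exp_expfam[OF assms] ennreal_power exp_of_nat_mult)
  finally show ?thesis .
qed

lemma density_expfam:
  assumes "\<theta>0 \<in> natparam \<gamma>"
  shows "density (expfam \<gamma> \<theta>0) (\<lambda>x. ennreal (exp ((\<theta>1 - \<theta>0) * x - (B \<theta>1 - B \<theta>0)))) = expfam \<gamma> \<theta>1"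
proof -
  have "density (expfam \<gamma> \<theta>0) (\<lambda>x. ennreal (exp ((\<theta>1 - \<theta>0) * x - (B \<theta>1 - B \<theta>0))))
      = density \<gamma> (\<lambda>x. ennreal (exp (\<theta>0 * x - B \<theta>0)) * ennreal (exp ((\<theta>1 - \<theta>0) * x - (B \<theta>1 - B \<theta>0))))"
    unfolding expfam_def by (rule density_density_eq) (auto intro: borel_measurable_\<gamma>)
  also have "(\<lambda>x. ennreal (exp (\<theta>0 * x - B \<theta>0)) * ennreal (exp ((\<theta>1 - \<theta>0) * x - (B \<theta>1 - B \<theta>0))))
      = (\<lambda>x. ennreal (exp (\<theta>1 * x - B \<theta>1)))"
    by (simp add: fun_eq_iff ennreal_mult[symmetric] algebra_simps flip: exp_add)
  finally show ?thesis by (simp add: expfam_def)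
qed

definition lik_ratio :: "nat \<Rightarrow> real \<Rightarrow> real \<Rightarrow> (nat \<Rightarrow> real) \<Rightarrow> real" where
  "lik_ratio n \<theta>0 \<theta>1 X = exp ((\<theta>1 - \<theta>0) * (\<Sum>i<n. X i) - real n * (B \<theta>1 - B \<theta>0))"

lemma borel_measurable_lik_ratio:
  "lik_ratio n \<theta>0 \<theta>1 \<in> borel_measurable (\<Pi>\<^sub>M i\<in>{..<n}. expfam \<gamma> \<theta>)"
  unfolding lik_ratio_def by (intro borel_measurable_PiM_expfam) measurable

lemma PiM_expfam_density:
  assumes t0: "\<theta>0 \<in> natparam \<gamma>" and t1: "\<theta>1 \<in> natparam \<gamma>"
  shows "(\<Pi>\<^sub>M i\<in>{..<n}. expfam \<gamma> \<theta>1)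
    = density (\<Pi>\<^sub>M i\<in>{..<n}. expfam \<gamma> \<theta>0) (\<lambda>X. ennreal (lik_ratio n \<theta>0 \<theta>1 X))"
    (is "_ = density ?P0 ?L")
proof -
  interpret P1: product_prob_space "\<lambda>_::nat. expfam \<gamma> \<theta>1"
    by (rule product_prob_spaceI) (rule prob_space_expfam[OF t1])
  interpret P0: product_prob_space "\<lambda>_::nat. expfam \<gamma> \<theta>0"
    by (rule product_prob_spaceI) (rule prob_space_expfam[OF t0])
  define r where "r = (\<lambda>x. ennreal (exp ((\<theta>1 - \<theta>0) * x - (B \<theta>1 - B \<theta>0))))"
  have rm: "r \<in> borel_measurable (expfam \<gamma> \<theta>0)" unfolding r_def by (intro borel_measurable_expfam) simp
  have Lm: "?L \<in> borel_measurable ?P0" using borel_measurable_lik_ratio by measurable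
  have "density ?P0 ?L = (\<Pi>\<^sub>M i\<in>{..<n}. expfam \<gamma> \<theta>1)"
  proof (rule P1.PiM_eqI)
    show "sets (density ?P0 ?L) = sets (\<Pi>\<^sub>M i\<in>{..<n}. expfam \<gamma> \<theta>1)"
      by (simp add: sets_PiM_expfam)
  next
    fix A assume A: "\<And>i. i \<in> {..<n} \<Longrightarrow> A i \<in> sets (expfam \<gamma> \<theta>1)"
    then have A0: "\<And>i. i \<in> {..<n} \<Longrightarrow> A i \<in> sets (expfam \<gamma> \<theta>0)" by (simp add: sets_expfam)
    have "emeasure (density ?P0 ?L) (Pi\<^sub>E {..<n} A) = (\<integral>\<^sup>+X. ?L X * indicator (Pi\<^sub>E {..<n} A) X \<partial>?P0)"
      by (rule emeasure_density[OF Lm]) (auto intro: sets_PiM_I_finite A0)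
    also have "\<dots> = (\<integral>\<^sup>+X. (\<Prod>i<n. r (X i) * indicator (A i) (X i)) \<partial>?P0)"
    proof (rule nn_integral_cong)
      fix X assume "X \<in> space ?P0"
      then have "X \<in> extensional {..<n}" by (simp add: space_PiM PiE_def)
      then have "indicator (Pi\<^sub>E {..<n} A) X = (\<Prod>i<n. indicator (A i) (X i) :: ennreal)"
        by (cases "\<forall>i<n. X i \<in> A i") (auto simp: PiE_def indicator_def)
      moreover have "?L X = (\<Prod>i<n. r (X i))"
        by (simp add: r_def lik_ratio_def exp_affine_sum prod_ennreal)
      ultimately show "?L X * indicator (Pi\<^sub>E {..<n} A) X = (\<Prod>i<n. r (X i) * indicator (A i) (X i))"
        by (simp add: prod.distrib)
    qed
    also have "\<dots> = (\<Prod>i<n. (\<integral>\<^sup>+x. r x * indicator (A i) x \<partial>expfam \<gamma> \<theta>0))"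
      using rm A0 by (intro P0.product_nn_integral_prod) auto
    also have "\<dots> = (\<Prod>i<n. emeasure (expfam \<gamma> \<theta>1) (A i))"
    proof (rule prod.cong[OF refl])
      fix i assume "i \<in> {..<n}"
      then have "emeasure (density (expfam \<gamma> \<theta>0) r) (A i) = (\<integral>\<^sup>+x. r x * indicator (A i) x \<partial>expfam \<gamma> \<theta>0)"
        by (intro emeasure_density rm A0)
      then show "(\<integral>\<^sup>+x. r x * indicator (A i) x \<partial>expfam \<gamma> \<theta>0) = emeasure (expfam \<gamma> \<theta>1) (A i)"
        using density_expfam[OF t0, of \<theta>1] by (simp add: r_def)
    qed
    finally show "emeasure (density ?P0 ?L) (Pi\<^sub>E {..<n} A) = (\<Prod>i<n. emeasure (expfam \<gamma> \<theta>1) (A i))" .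
  qed simp
  then show ?thesis ..
qed

text \<open>With \<open>S = n \<mu>\<close> the sum, \<open>n D(S/n, \<mu>) = sup\<^sub>l (l S - n psi l)\<close>; the slopes \<open>l > 0\<close>
  and \<open>l < 0\<close> give the two terms, slope \<open>0\<close> contributes \<open>0\<close>.\<close>
lemma n_bregman_le_conj_pos:
  assumes \<theta>: "\<theta> \<in> \<Theta>" and n: "1 \<le> n"
  shows "e2ennreal (ereal (real n) * bregman \<gamma> \<Theta> \<theta> (y / real n))
    \<le> conj_pos {l. l + \<theta> \<in> \<Theta> \<and> 0 < l} (\<lambda>l. real n * (B (l + \<theta>) - B \<theta>)) y
     + conj_pos {l. - l + \<theta> \<in> \<Theta> \<and> 0 < l} (\<lambda>l. real n * (B (- l + \<theta>) - B \<theta>)) (- y)"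
  (is "_ \<le> ?G1 + ?G2")
proof -
  have np: "0 < ereal (real n)" "ereal (real n) \<noteq> \<infinity>" using n by auto
  have slope: "ereal (l * y - real n * (B (l + \<theta>) - B \<theta>)) \<le> enn2ereal (?G1 + ?G2)"
    if l: "l + \<theta> \<in> \<Theta>" for l
  proof (rule ereal_le_enn2ereal)
    show "ennreal (l * y - real n * (B (l + \<theta>) - B \<theta>)) \<le> ?G1 + ?G2"
    proof (cases l "0::real" rule: linorder_cases)
      case greater
      then have "ennreal (l * y - real n * (B (l + \<theta>) - B \<theta>)) \<le> ?G1"
        unfolding conj_pos_def using l by (intro SUP_upper2[of l]) auto
      then show ?thesis by (rule order_trans) simp
    next
      case less
      then have "ennreal (l * y - real n * (B (l + \<theta>) - B \<theta>)) \<le> ?G2"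
        unfolding conj_pos_def using l by (intro SUP_upper2[of "-l"]) (auto simp: add.commute)
      then show ?thesis by (rule order_trans) simp
    qed simp
  qed
  have "ereal (real n) * bregman \<gamma> \<Theta> \<theta> (y / real n) \<le> enn2ereal (?G1 + ?G2)"
    unfolding bregman_eq_psi_star[OF \<theta>] psi_star_eq
  proof (subst ereal_le_divide_pos[OF np, symmetric], rule SUP_least)
    fix l assume "l \<in> {l. l + \<theta> \<in> \<Theta>}"
    have "ereal (real n) * ereal (l * (y / real n) - (B (l + \<theta>) - B \<theta>))
        = ereal (l * y - real n * (B (l + \<theta>) - B \<theta>))"
      using n by (simp add: field_simps)
    also have "\<dots> \<le> enn2ereal (?G1 + ?G2)" using slope \<open>l \<in> {l. l + \<theta> \<in> \<Theta>}\<close> by simp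
    finally show "ereal (l * (y / real n) - (B (l + \<theta>) - B \<theta>)) \<le> enn2ereal (?G1 + ?G2) / ereal (real n)"
      by (subst ereal_le_divide_pos[OF np])
  qed
  from e2ennreal_mono[OF this] show ?thesis by simp
qed

theorem risk_sample_mean_le_2:
  assumes \<theta>: "\<theta> \<in> \<Theta>" and n: "1 \<le> n"
  shows "risk \<gamma> \<Theta> n (\<lambda>X. (\<Sum>i<n. X i) / real n) \<theta> \<le> 2"
proof -
  define P where "P = (\<Pi>\<^sub>M i\<in>{..<n}. expfam \<gamma> \<theta>)"
  define S where "S X = (\<Sum>i<n. X i)" for X :: "nat \<Rightarrow> real"
  define T1 where "T1 = {l. l + \<theta> \<in> \<Theta> \<and> 0 < l}"
  define T2 where "T2 = {l. - l + \<theta> \<in> \<Theta> \<and> 0 < l}"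
  define \<phi>1 where "\<phi>1 l = real n * (B (l + \<theta>) - B \<theta>)" for l
  define \<phi>2 where "\<phi>2 l = real n * (B (- l + \<theta>) - B \<theta>)" for l
  have \<theta>n: "\<theta> \<in> natparam \<gamma>" using \<Theta>_natparam[OF \<theta>] .
  have P: "sigma_finite_measure P"
    unfolding P_def by (intro prob_space_imp_sigma_finite prob_space_PiM prob_space_expfam \<theta>n)
  have S[measurable]: "S \<in> borel_measurable P" unfolding P_def S_def
    by (intro borel_measurable_PiM_expfam) measurable
  have T: "T1 \<subseteq> {0<..}" "T2 \<subseteq> {0<..}" by (auto simp: T1_def T2_def)
  have mgf1: "(\<integral>\<^sup>+X. ennreal (exp (l * S X - \<phi>1 l)) \<partial>P) \<le> 1" if "l \<in> T1" for l
    using nn_integral_exp_sum_PiM[OF \<theta>n, of l n "B (l + \<theta>) - B \<theta>"] that \<Theta>_natparam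
    by (simp add: P_def S_def \<phi>1_def T1_def add.commute)
  have mgf2: "(\<integral>\<^sup>+X. ennreal (exp (l * - S X - \<phi>2 l)) \<partial>P) \<le> 1" if "l \<in> T2" for l
    using nn_integral_exp_sum_PiM[OF \<theta>n, of "-l" n "B (- l + \<theta>) - B \<theta>"] that \<Theta>_natparam
    by (simp add: P_def S_def \<phi>2_def T2_def add.commute)
  have "risk \<gamma> \<Theta> n (\<lambda>X. (\<Sum>i<n. X i) / real n) \<theta>
      \<le> (\<integral>\<^sup>+X. conj_pos T1 \<phi>1 (S X) + conj_pos T2 \<phi>2 (- S X) \<partial>P)"
    unfolding risk_def P_def[symmetric]
    by (rule nn_integral_mono) (unfold S_def T1_def T2_def \<phi>1_def \<phi>2_def, rule n_bregman_le_conj_pos[OF \<theta> n])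
  also have "\<dots> = (\<integral>\<^sup>+X. conj_pos T1 \<phi>1 (S X) \<partial>P) + (\<integral>\<^sup>+X. conj_pos T2 \<phi>2 (- S X) \<partial>P)"
    by (intro nn_integral_add measurable_compose[OF _ borel_measurable_conj_pos[OF T(1)]]
        measurable_compose[OF _ borel_measurable_conj_pos[OF T(2)]]) measurable
  also have "\<dots> \<le> 1 + 1"
    by (intro add_mono nn_integral_conj_pos_le_1[OF P] T mgf1 mgf2) measurable
  finally show ?thesis by simp
qed

text \<open>\<open>exp (- bhatt \<theta>0 \<theta>1) = \<integral> \<surd>(p\<^sub>\<theta>\<^sub>0 p\<^sub>\<theta>\<^sub>1) d\<gamma>\<close> is the Hellinger affinity of one observation.\<close>
definition bhatt :: "real \<Rightarrow> real \<Rightarrow> real" where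
  "bhatt \<theta>0 \<theta>1 = (B \<theta>0 + B \<theta>1) / 2 - B ((\<theta>0 + \<theta>1) / 2)"

lemma overlap_ge_exp_bhatt:
  assumes t0: "\<theta>0 \<in> natparam \<gamma>" and t1: "\<theta>1 \<in> natparam \<gamma>" and m: "(\<theta>0 + \<theta>1) / 2 \<in> natparam \<gamma>"
  shows "ennreal (exp (- 2 * real n * bhatt \<theta>0 \<theta>1) / 2)
    \<le> (\<integral>\<^sup>+X. ennreal (min 1 (lik_ratio n \<theta>0 \<theta>1 X)) \<partial>(\<Pi>\<^sub>M i\<in>{..<n}. expfam \<gamma> \<theta>0))"
proof -
  define P0 where "P0 = (\<Pi>\<^sub>M i\<in>{..<n}. expfam \<gamma> \<theta>0)"
  define w where "w X = exp ((\<theta>1 - \<theta>0) / 2 * (\<Sum>i<n. X i) - real n * ((B \<theta>1 - B \<theta>0) / 2))" for X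
  have sq: "(w X)\<^sup>2 = lik_ratio n \<theta>0 \<theta>1 X" for X
    by (simp add: w_def lik_ratio_def power2_eq_square field_simps flip: exp_add)
  have P0: "prob_space P0" unfolding P0_def by (intro prob_space_PiM prob_space_expfam t0)
  have wm: "w \<in> borel_measurable P0" unfolding w_def P0_def
    by (intro borel_measurable_PiM_expfam) measurable
  have "(\<integral>\<^sup>+X. ennreal ((w X)\<^sup>2) \<partial>P0) = ennreal (exp (real n * (B \<theta>1 - B \<theta>0 - (B \<theta>1 - B \<theta>0))))"
    unfolding sq lik_ratio_def P0_def using nn_integral_exp_sum_PiM[OF t0, of "\<theta>1 - \<theta>0" n "B \<theta>1 - B \<theta>0"] t1
    by simp
  then have sq_int: "(\<integral>\<^sup>+X. ennreal ((w X)\<^sup>2) \<partial>P0) \<le> 1" by simp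
  have mid: "\<theta>0 + (\<theta>1 - \<theta>0) / 2 = (\<theta>0 + \<theta>1) / 2" by (simp add: field_simps)
  have "(\<integral>\<^sup>+X. ennreal (w X) \<partial>P0)
      = ennreal (exp (real n * (B ((\<theta>0 + \<theta>1) / 2) - B \<theta>0 - (B \<theta>1 - B \<theta>0) / 2)))"
    unfolding w_def P0_def by (rule nn_integral_exp_sum_PiM[OF t0, of "(\<theta>1 - \<theta>0) / 2", unfolded mid, OF m])
  also have "\<dots> = ennreal (exp (- real n * bhatt \<theta>0 \<theta>1))" by (simp add: bhatt_def field_simps)
  finally have w_int: "ennreal (exp (- real n * bhatt \<theta>0 \<theta>1)) \<le> (\<integral>\<^sup>+X. ennreal (w X) \<partial>P0)" by simp
  have "ennreal ((exp (- real n * bhatt \<theta>0 \<theta>1))\<^sup>2 / 2) \<le> (\<integral>\<^sup>+X. ennreal (min 1 ((w X)\<^sup>2)) \<partial>P0)"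
    by (rule nn_integral_min_one_sq_ge[OF P0 wm _ sq_int _ w_int]) (simp_all add: w_def)
  moreover have "(exp (- real n * bhatt \<theta>0 \<theta>1))\<^sup>2 = exp (- 2 * real n * bhatt \<theta>0 \<theta>1)"
    by (simp add: power2_eq_square flip: exp_add)
  ultimately show ?thesis by (simp add: sq P0_def)
qed

lemma nn_integral_tangent_loss_le_risk:
  assumes "\<theta> \<in> \<Theta>" and "t \<in> \<Theta>"
  shows "(\<integral>\<^sup>+X. ennreal (real n * ((t - \<theta>) * est X - (B t - B \<theta>))) \<partial>(\<Pi>\<^sub>M i\<in>{..<n}. expfam \<gamma> \<theta>))
    \<le> risk \<gamma> \<Theta> n est \<theta>"
  unfolding risk_def
proof (rule nn_integral_mono)
  fix X
  have "ereal (real n) * ereal ((t - \<theta>) * est X - (B t - B \<theta>))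
      \<le> ereal (real n) * bregman \<gamma> \<Theta> \<theta> (est X)"
    using assms by (intro ereal_mult_left_mono bregman_ge) auto
  from e2ennreal_mono[OF this]
  show "ennreal (real n * ((t - \<theta>) * est X - (B t - B \<theta>)))
      \<le> e2ennreal (ereal (real n) * bregman \<gamma> \<Theta> \<theta> (est X))" by simp
qed

text \<open>Le Cam's two-point argument: testing with the tangent at the midpoint, the losses at
  \<open>\<theta>0\<close> and \<open>\<theta>1\<close> add up to \<open>2 n bhatt \<theta>0 \<theta>1\<close> whatever the estimate.\<close>
lemma overlap_le_risk_sum:
  assumes t0: "\<theta>0 \<in> \<Theta>" and t1: "\<theta>1 \<in> \<Theta>" and m: "(\<theta>0 + \<theta>1) / 2 \<in> \<Theta>"
    and gap: "1 \<le> 2 * real n * bhatt \<theta>0 \<theta>1"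
    and est: "est \<in> borel_measurable (\<Pi>\<^sub>M i\<in>{..<n}. \<gamma>)"
  shows "(\<integral>\<^sup>+X. ennreal (min 1 (lik_ratio n \<theta>0 \<theta>1 X)) \<partial>(\<Pi>\<^sub>M i\<in>{..<n}. expfam \<gamma> \<theta>0))
    \<le> risk \<gamma> \<Theta> n est \<theta>0 + risk \<gamma> \<Theta> n est \<theta>1"
proof -
  define P0 where "P0 = (\<Pi>\<^sub>M i\<in>{..<n}. expfam \<gamma> \<theta>0)"
  define L where "L = (\<lambda>X. ennreal (lik_ratio n \<theta>0 \<theta>1 X))"
  define mid where "mid = (\<theta>0 + \<theta>1) / 2"
  define loss where "loss \<theta> X = ennreal (real n * ((mid - \<theta>) * est X - (B mid - B \<theta>)))" for \<theta> X
  have "est \<in> borel_measurable (\<Pi>\<^sub>M i\<in>{..<n}. borel)"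
    using est measurable_cong_sets[OF sets_PiM_\<gamma> refl] by blast
  then have [measurable]: "est \<in> borel_measurable P0"
    unfolding P0_def by (rule borel_measurable_PiM_expfam)
  have [measurable]: "L \<in> borel_measurable P0"
    unfolding L_def P0_def using borel_measurable_lik_ratio by measurable
  have dens: "density P0 L = (\<Pi>\<^sub>M i\<in>{..<n}. expfam \<gamma> \<theta>1)"
    using PiM_expfam_density[OF \<Theta>_natparam[OF t0] \<Theta>_natparam[OF t1], of n]
    by (simp add: P0_def L_def)
  have loss_sum: "1 \<le> loss \<theta>0 X + loss \<theta>1 X" for X
  proof -
    have "real n * ((mid - \<theta>0) * est X - (B mid - B \<theta>0))
        + real n * ((mid - \<theta>1) * est X - (B mid - B \<theta>1)) = 2 * real n * bhatt \<theta>0 \<theta>1"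
      by (simp add: mid_def bhatt_def field_simps)
    then have "ennreal 1 \<le> ennreal (real n * ((mid - \<theta>0) * est X - (B mid - B \<theta>0))
        + real n * ((mid - \<theta>1) * est X - (B mid - B \<theta>1)))"
      using gap by (intro ennreal_leI) simp
    also have "\<dots> \<le> loss \<theta>0 X + loss \<theta>1 X" unfolding loss_def by (rule ennreal_add_le)
    finally show ?thesis by simp
  qed
  have "(\<integral>\<^sup>+X. ennreal (min 1 (lik_ratio n \<theta>0 \<theta>1 X)) \<partial>P0)
      \<le> (\<integral>\<^sup>+X. loss \<theta>0 X + L X * loss \<theta>1 X \<partial>P0)"
  proof (rule nn_integral_mono)
    fix X
    have "ennreal (min 1 (lik_ratio n \<theta>0 \<theta>1 X)) = min 1 (L X)"
      using min_ennreal[of 1 "lik_ratio n \<theta>0 \<theta>1 X"] by (simp add: L_def lik_ratio_def)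
    also have "\<dots> \<le> min 1 (L X) * (loss \<theta>0 X + loss \<theta>1 X)"
      using mult_left_mono[OF loss_sum[of X], of "min 1 (L X)"] by simp
    also have "\<dots> \<le> 1 * loss \<theta>0 X + L X * loss \<theta>1 X"
      unfolding distrib_left by (intro add_mono mult_right_mono) auto
    finally show "ennreal (min 1 (lik_ratio n \<theta>0 \<theta>1 X)) \<le> loss \<theta>0 X + L X * loss \<theta>1 X"
      by simp
  qed
  also have "\<dots> = (\<integral>\<^sup>+X. loss \<theta>0 X \<partial>P0) + (\<integral>\<^sup>+X. L X * loss \<theta>1 X \<partial>P0)"
    by (rule nn_integral_add) (simp_all add: loss_def)
  also have "(\<integral>\<^sup>+X. L X * loss \<theta>1 X \<partial>P0) = (\<integral>\<^sup>+X. loss \<theta>1 X \<partial>(\<Pi>\<^sub>M i\<in>{..<n}. expfam \<gamma> \<theta>1))"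
    unfolding dens[symmetric] loss_def by (intro nn_integral_density[symmetric]; measurable)
  also have "(\<integral>\<^sup>+X. loss \<theta>0 X \<partial>P0) + \<dots> \<le> risk \<gamma> \<Theta> n est \<theta>0 + risk \<gamma> \<Theta> n est \<theta>1"
    unfolding P0_def loss_def mid_def by (intro add_mono nn_integral_tangent_loss_le_risk t0 t1 m)
  finally show ?thesis unfolding P0_def .
qed

lemma exists_bhatt_eq:
  assumes t0: "\<theta>0 \<in> \<Theta>"
  shows "\<exists>N. \<forall>n\<ge>N. \<exists>\<theta>1\<in>\<Theta>. (\<theta>0 + \<theta>1) / 2 \<in> \<Theta> \<and> 2 * real n * bhatt \<theta>0 \<theta>1 = 1"
proof -
  obtain e where e: "e > 0" "\<And>t. \<bar>t - \<theta>0\<bar> < e \<Longrightarrow> t \<in> \<Theta>" using \<Theta>_ball[OF t0] by blast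
  define \<delta> where "\<delta> = e / 2"
  have \<delta>: "0 < \<delta>" using e by (simp add: \<delta>_def)
  have near: "t \<in> \<Theta>" if "\<theta>0 \<le> t" "t \<le> \<theta>0 + \<delta>" for t
    using e that by (auto simp: \<delta>_def)
  have pos: "0 < bhatt \<theta>0 (\<theta>0 + \<delta>)"
    using strict_midpoint[of \<theta>0 "\<theta>0 + \<delta>"] near[of "\<theta>0 + \<delta>"] t0 \<delta>
    by (simp add: bhatt_def \<Theta>_natparam)
  have cont: "continuous_on {\<theta>0..\<theta>0 + \<delta>} (bhatt \<theta>0)"
  proof (intro continuous_at_imp_continuous_on ballI)
    fix t assume t: "t \<in> {\<theta>0..\<theta>0 + \<delta>}"
    have "isCont B t" "isCont B ((\<theta>0 + t) / 2)"
      using t \<delta> by (auto intro!: isCont_logpart near)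
    then show "isCont (bhatt \<theta>0) t"
      unfolding bhatt_def by (auto intro!: continuous_intros isCont_o2[where g = B])
  qed
  define N where "N = nat \<lceil>1 / (2 * bhatt \<theta>0 (\<theta>0 + \<delta>))\<rceil> + 1"
  have "\<exists>\<theta>1\<in>\<Theta>. (\<theta>0 + \<theta>1) / 2 \<in> \<Theta> \<and> 2 * real n * bhatt \<theta>0 \<theta>1 = 1" if "N \<le> n" for n
  proof -
    have n: "1 \<le> n" using that by (simp add: N_def)
    have "1 / (2 * bhatt \<theta>0 (\<theta>0 + \<delta>)) < real n"
      using that unfolding N_def by linarith
    then have "1 / (2 * real n) \<le> bhatt \<theta>0 (\<theta>0 + \<delta>)"
      using pos n by (simp add: field_simps)
    moreover have "bhatt \<theta>0 \<theta>0 \<le> 1 / (2 * real n)" by (simp add: bhatt_def)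
    ultimately obtain \<theta>1 where \<theta>1: "\<theta>0 \<le> \<theta>1" "\<theta>1 \<le> \<theta>0 + \<delta>" "bhatt \<theta>0 \<theta>1 = 1 / (2 * real n)"
      using IVT'[of "bhatt \<theta>0" \<theta>0 "1 / (2 * real n)" "\<theta>0 + \<delta>", OF _ _ _ cont] \<delta> by auto
    then show ?thesis using n by (intro bexI[of _ \<theta>1] conjI near) auto
  qed
  then show ?thesis by blast
qed

theorem minimax_risk_ge:
  "\<exists>N. \<forall>n\<ge>N. ennreal (exp (-1) / 4) \<le>
     (INF est \<in> borel_measurable (\<Pi>\<^sub>M i\<in>{..<n}. \<gamma>). SUP \<theta>\<in>\<Theta>. risk \<gamma> \<Theta> n est \<theta>)"
proof -
  obtain \<theta>0 where t0: "\<theta>0 \<in> \<Theta>" using ne_\<Theta> by blast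
  obtain N where N: "\<And>n. N \<le> n \<Longrightarrow>
      \<exists>\<theta>1\<in>\<Theta>. (\<theta>0 + \<theta>1) / 2 \<in> \<Theta> \<and> 2 * real n * bhatt \<theta>0 \<theta>1 = 1"
    using exists_bhatt_eq[OF t0] by blast
  have "ennreal (exp (-1) / 4) \<le> (SUP \<theta>\<in>\<Theta>. risk \<gamma> \<Theta> n est \<theta>)"
    if "N \<le> n" and est: "est \<in> borel_measurable (\<Pi>\<^sub>M i\<in>{..<n}. \<gamma>)" for n est
  proof -
    obtain \<theta>1 where t1: "\<theta>1 \<in> \<Theta>" "(\<theta>0 + \<theta>1) / 2 \<in> \<Theta>" "2 * real n * bhatt \<theta>0 \<theta>1 = 1"
      using N[OF \<open>N \<le> n\<close>] by blast
    define R where "R = (SUP \<theta>\<in>\<Theta>. risk \<gamma> \<Theta> n est \<theta>)"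
    have "ennreal (exp (- 2 * real n * bhatt \<theta>0 \<theta>1) / 2)
        \<le> (\<integral>\<^sup>+X. ennreal (min 1 (lik_ratio n \<theta>0 \<theta>1 X)) \<partial>(\<Pi>\<^sub>M i\<in>{..<n}. expfam \<gamma> \<theta>0))"
      using t0 t1 by (intro overlap_ge_exp_bhatt \<Theta>_natparam)
    also have "\<dots> \<le> risk \<gamma> \<Theta> n est \<theta>0 + risk \<gamma> \<Theta> n est \<theta>1"
      using t0 t1 est by (intro overlap_le_risk_sum) auto
    also have "\<dots> \<le> R + R" unfolding R_def using t0 t1 by (intro add_mono SUP_upper)
    finally have le: "ennreal (exp (-1) / 2) \<le> R + R" using t1(3) by (simp add: mult.assoc)
    show ?thesis
    proof (cases R)
      case (real s)
      then have "R + R = ennreal (s + s)" by (simp add: ennreal_plus[symmetric] del: ennreal_plus)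
      with le have "ennreal (exp (-1) / 2) \<le> ennreal (s + s)" by (rule ord_le_eq_trans)
      then have "exp (-1) / 2 \<le> s + s" using real by (subst (asm) ennreal_le_iff) auto
      then show ?thesis using real by (simp add: R_def[symmetric])
    qed (simp add: R_def[symmetric])
  qed
  then show ?thesis by (blast intro: INF_greatest)
qed

end

theorem proposition4:
  fixes \<gamma> :: "real measure" and \<Theta> :: "real set"
  assumes sets_\<gamma>: "sets \<gamma> = sets borel"
    and open_\<Theta>: "open \<Theta>" and ne_\<Theta>: "\<Theta> \<noteq> {}"
    and sub_\<Theta>: "\<Theta> \<subseteq> natparam \<gamma>"
    and strict: "strictly_convex_on (natparam \<gamma>) (logpart \<gamma>)"
  shows "(\<forall>\<theta>\<in>\<Theta>. \<forall>n::nat. n \<ge> 1 \<longrightarrow>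
            risk \<gamma> \<Theta> n (\<lambda>X. (\<Sum>i<n. X i) / real n) \<theta> \<le> 2)
       \<and> (\<forall>M \<epsilon>0. local_triangle (meanp \<gamma> ` \<Theta>) (sqrt_breg \<gamma> \<Theta>) M \<epsilon>0 \<longrightarrow>
            (\<exists>N. \<forall>n\<ge>N.
               (INF est \<in> borel_measurable (\<Pi>\<^sub>M i\<in>{..<n}. \<gamma>). SUP \<theta>\<in>\<Theta>. risk \<gamma> \<Theta> n est \<theta>)
                 \<ge> ennreal (M * ln 2 / 16)))"
proof -
  interpret nat_exp_family \<gamma> \<Theta> using assms by unfold_locales
  txt \<open>The local triangle condition is needed only for \<open>M \<le> 1\<close>: the two-point bound
    \<open>exp (-1) / 4\<close> already dominates \<open>M ln 2 / 16\<close>.\<close>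
  show ?thesis
  proof (intro conjI ballI allI impI)
    fix \<theta> and n :: nat assume "\<theta> \<in> \<Theta>" "1 \<le> n"
    then show "risk \<gamma> \<Theta> n (\<lambda>X. (\<Sum>i<n. X i) / real n) \<theta> \<le> 2" by (rule risk_sample_mean_le_2)
  next
    fix M \<epsilon>0 assume "local_triangle (meanp \<gamma> ` \<Theta>) (sqrt_breg \<gamma> \<Theta>) M \<epsilon>0"
    then have "M \<le> 1" by (simp add: local_triangle_def)
    then have "M * ln 2 \<le> 1 * 1" using ln_le_minus_one[of 2] by (intro mult_mono) auto
    moreover have "1 / 3 \<le> exp (-1::real)"
      using exp_le by (simp add: exp_minus inverse_eq_divide divide_le_eq)
    ultimately have "ennreal (M * ln 2 / 16) \<le> ennreal (exp (-1) / 4)" by (intro ennreal_leI) simp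
    then show "\<exists>N. \<forall>n\<ge>N. (INF est \<in> borel_measurable (\<Pi>\<^sub>M i\<in>{..<n}. \<gamma>). SUP \<theta>\<in>\<Theta>. risk \<gamma> \<Theta> n est \<theta>)
        \<ge> ennreal (M * ln 2 / 16)"
      using minimax_risk_ge by (blast intro: order_trans)
  qed
qed

end
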